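(* Let $\mu$ be a purely atomic positive $\sigma$-finite measure on $(\Omega,\mathcal B)$ whose range $\{\mu(A):A\in\mathcal B\}$ is an interval, and such that for every $\varepsilon>0$, $\mu\big(\bigcup\{A_n: A_n\text{ an atom},\ \mu(A_n)>\varepsilon\}\big)<\infty$. Then for every $t<\mu(\Omega)$ there is a set $C\in\mathcal B$ with $\mu(C)\ge t$ such that the range of the restriction $\mu|_C$ is a finite interval.
   Context: An atom of $\mu$ is a set $A$ with $\mu(A)>0$ such that each measurable subset of $A$ has measure $0$ or $\mu(A)$; $\mu$ is purely atomic if $\Omega$ is, up to a null set, the union of the atoms. $\mu|_C$ denotes $A\mapsto\mu(A\cap C)$. *)

theory Defs
  imports "HOL-Analysis.Analysis"
begin

definition atom :: "'a measure \<Rightarrow> 'a set \<Rightarrow> bool" where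
  "atom M A \<longleftrightarrow> A \<in> sets M \<and> emeasure M A > 0 \<and>
     (\<forall>B \<in> sets M. B \<subseteq> A \<longrightarrow> emeasure M B = 0 \<or> emeasure M B = emeasure M A)"

definition purely_atomic :: "'a measure \<Rightarrow> bool" where
  "purely_atomic M \<longleftrightarrow> (\<exists>N \<in> null_sets M. space M - N \<subseteq> \<Union>{A. atom M A})"

definition order_interval :: "'b::linorder set \<Rightarrow> bool" where
  "order_interval S \<longleftrightarrow> (\<forall>x\<in>S. \<forall>z\<in>S. \<forall>y. x \<le> y \<and> y \<le> z \<longrightarrow> y \<in> S)"

definition measure_range :: "'a measure \<Rightarrow> ennreal set" where
  "measure_range M = emeasure M ` sets M"

definition restr_range :: "'a measure \<Rightarrow> 'a set \<Rightarrow> ennreal set" where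
  "restr_range M C = (\<lambda>A. emeasure M (A \<inter> C)) ` sets M"

end

(*
  If mu(Omega) is finite, take C = Omega. Otherwise the hypothesis on large atoms makes every set of
  infinite measure contain subsets of arbitrarily small positive measure: if not, one could peel off
  infinitely many disjoint atoms of measure above some g > 0, whose union would have finite and
  infinite measure at once. A greedy exhaustion, taking at each step a piece of at least half the
  largest admissible measure, then shows that every finite value is the measure of a subset of a set
  of infinite measure. Choosing disjoint pieces of measures t/2, t/4, ... gives a set C of measure t,
  and binary expansions show that every value in [0, t] is the measure of a subset of C.
*)

theory Submission
  imports Defs
begin

lemma greedy_disjoint_family:
  assumes start: "I 0 {}"
    and step: "\<And>n V. I n V \<Longrightarrow> \<exists>B. B \<inter> V = {} \<and> P n V B \<and> I (Suc n) (V \<union> B)"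
  obtains b :: "nat \<Rightarrow> 'a set"
  where "disjoint_family b" "\<And>n. I n (\<Union>k<n. b k)" "\<And>n. P n (\<Union>k<n. b k) (b n)"
proof -
  have "\<exists>V. \<forall>n. (I n (V n) \<and> (n = 0 \<longrightarrow> V n = {})) \<and>
                 (V n \<subseteq> V (Suc n) \<and> P n (V n) (V (Suc n) - V n))"
  proof (rule dependent_nat_choice)
    fix V n assume "I n V \<and> (n = 0 \<longrightarrow> V = {})"
    then obtain B where "B \<inter> V = {}" "P n V B" "I (Suc n) (V \<union> B)" using step by blast
    moreover have "V \<union> B - V = B" using \<open>B \<inter> V = {}\<close> by blast
    ultimately show "\<exists>W. (I (Suc n) W \<and> (Suc n = 0 \<longrightarrow> W = {})) \<and> V \<subseteq> W \<and> P n V (W - V)"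
      by (intro exI[of _ "V \<union> B"]) auto
  qed (use start in auto)
  then obtain V where V: "\<And>n. I n (V n)" "V 0 = {}" "\<And>n. V n \<subseteq> V (Suc n)"
    "\<And>n. P n (V n) (V (Suc n) - V n)"
    by blast
  define b where "b n = V (Suc n) - V n" for n
  have V_eq: "V n = (\<Union>k<n. b k)" for n
    by (induction n) (use V(2,3) in \<open>auto simp: b_def lessThan_Suc\<close>)
  show thesis
  proof (rule that)
    show "disjoint_family b"
      unfolding b_def using V(3) by (rule disjoint_family_Suc)
    show "I n (\<Union>k<n. b k)" for n
      using V(1)[of n] unfolding V_eq .
    have "P n (V n) (b n)" for n
      using V(4) by (simp only: b_def)
    then show "P n (\<Union>k<n. b k) (b n)" for n
      unfolding V_eq .
  qed
qed

lemma suminf_eq_top_if_bounded_below: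
  fixes f :: "nat \<Rightarrow> ennreal"
  assumes "c > 0" "\<And>n. c \<le> f n"
  shows "suminf f = \<infinity>"
proof -
  define r where "r = enn2real (min c 1)"
  have "r > 0"
    using assms(1) unfolding r_def by (simp add: enn2real_positive_iff min_less_iff_disj)
  then have "(\<Sum>n. ennreal r) = top"
    by (intro summable_iff_suminf_neq_top) (auto simp: summable_const_iff)
  moreover have "ennreal r \<le> c"
    unfolding r_def by (simp add: ennreal_enn2real_if)
  then have "(\<Sum>n. ennreal r) \<le> suminf f"
    using assms(2) by (intro suminf_le) (auto intro: order.trans)
  ultimately show ?thesis by (simp add: top_unique)
qed

lemma ennreal_Sup_le_twice_elem:
  fixes S :: "ennreal set"
  assumes "S \<noteq> {}" "Sup S < \<infinity>"
  shows "\<exists>s\<in>S. Sup S \<le> 2 * s"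
proof (cases "Sup S = 0")
  case True
  then show ?thesis using assms(1) by auto
next
  case False
  then obtain r where r: "Sup S = ennreal r" "r > 0"
    using assms(2) by (cases "Sup S") (auto simp: top_unique)
  then have "ennreal (r / 2) < Sup S" by (simp add: ennreal_less_iff)
  then obtain s where s: "s \<in> S" "ennreal (r / 2) < s" by (auto simp: less_Sup_iff)
  have "Sup S = 2 * ennreal (r / 2)"
    using r by (simp add: ennreal_mult''[symmetric] flip: ennreal_numeral)
  also have "\<dots> \<le> 2 * s"
    using s(2) by (intro mult_left_mono) auto
  finally show ?thesis using s(1) by blast
qed

lemma binary_expansion:
  fixes z :: real
  assumes "0 \<le> z" "z < 1"
  obtains \<delta> :: "nat \<Rightarrow> bool" where "(\<lambda>k. if \<delta> k then 1 / 2 ^ Suc k else 0) sums z"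
proof -
  define dig where "dig k = \<lfloor>2 ^ Suc k * z\<rfloor> - 2 * \<lfloor>2 ^ k * z\<rfloor>" for k :: nat
  have "2 * \<lfloor>w\<rfloor> \<le> \<lfloor>2 * w\<rfloor> \<and> \<lfloor>2 * w\<rfloor> < 2 * \<lfloor>w\<rfloor> + 2" for w :: real
    by (simp add: le_floor_iff floor_less_iff) linarith
  from this[of "2 ^ k * z"] have dig: "dig k = 0 \<or> dig k = 1" for k
    unfolding dig_def by (simp only: power_Suc mult.assoc) linarith
  have partial_sum: "(\<Sum>k<n. of_int (dig k) / 2 ^ Suc k) = of_int \<lfloor>2 ^ n * z\<rfloor> / (2 ^ n :: real)" for n
  proof (induction n)
    case 0
    then show ?case using assms by (simp add: floor_eq_iff)
  next
    case (Suc n)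
    then show ?case by (simp add: dig_def field_simps)
  qed
  have lower: "z - (1/2) ^ n \<le> of_int \<lfloor>2 ^ n * z\<rfloor> / 2 ^ n" for n :: nat
  proof -
    have "2 ^ n * z - 1 \<le> of_int \<lfloor>2 ^ n * z\<rfloor>" by linarith
    then have "(2 ^ n * z - 1) / 2 ^ n \<le> of_int \<lfloor>2 ^ n * z\<rfloor> / (2::real) ^ n"
      by (intro divide_right_mono) simp_all
    then show ?thesis by (simp add: power_one_over diff_divide_distrib)
  qed
  have upper: "of_int \<lfloor>2 ^ n * z\<rfloor> / 2 ^ n \<le> z" for n :: nat
    by (simp add: field_simps)
  have lim: "(\<lambda>n. z - (1/2) ^ n) \<longlonglongrightarrow> z"
    using tendsto_diff[OF tendsto_const[of z] LIMSEQ_power_zero[of "1/2 :: real"]] by simp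
  have "\<forall>\<^sub>F n in sequentially. z - (1/2) ^ n \<le> of_int \<lfloor>2 ^ n * z\<rfloor> / 2 ^ n"
    by (intro always_eventually allI lower)
  moreover have "\<forall>\<^sub>F n in sequentially. of_int \<lfloor>2 ^ n * z\<rfloor> / 2 ^ n \<le> z"
    by (intro always_eventually allI upper)
  ultimately have "(\<lambda>n. of_int \<lfloor>2 ^ n * z\<rfloor> / 2 ^ n) \<longlonglongrightarrow> z"
    using lim tendsto_const by (rule tendsto_sandwich)
  then have "(\<lambda>k. of_int (dig k) / 2 ^ Suc k) sums z"
    unfolding sums_def partial_sum .
  moreover have "(\<lambda>k. of_int (dig k) / 2 ^ Suc k) = (\<lambda>k. if dig k = 1 then 1 / 2 ^ Suc k else 0 :: real)"
    using dig by (force simp: fun_eq_iff)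
  ultimately show thesis by (intro that[of "\<lambda>k. dig k = 1"]) (simp only:)
qed

lemma emeasure_Diff_eq_top:
  assumes "X \<in> sets M" "emeasure M X = \<infinity>" "U \<in> sets M" "emeasure M U < \<infinity>"
  shows "emeasure M (X - U) = \<infinity>"
proof -
  have "emeasure M X \<le> emeasure M ((X - U) \<union> U)"
    using assms by (intro emeasure_mono) auto
  also have "\<dots> \<le> emeasure M (X - U) + emeasure M U"
    using assms by (intro emeasure_subadditive) auto
  finally have "emeasure M (X - U) + emeasure M U = \<infinity>"
    using assms(2) by (simp add: top_unique)
  then show ?thesis
    using assms(4) by (auto simp: ennreal_add_eq_top)
qed

lemma emeasure_Un_less_top:
  assumes "A \<in> sets M" "B \<in> sets M" "emeasure M A < \<infinity>" "emeasure M B < \<infinity>"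
  shows "emeasure M (A \<union> B) < \<infinity>"
  using emeasure_subadditive[OF assms(1,2)] assms(3,4)
  by (auto simp: ennreal_add_less_top intro: le_less_trans)

lemma atom_in_set_without_small_subsets:
  assumes Z: "Z \<in> sets M" "0 < emeasure M Z" "emeasure M Z < \<infinity>" and "g > 0"
    and no_small: "\<And>D. D \<in> sets M \<Longrightarrow> D \<subseteq> Z \<Longrightarrow> emeasure M D = 0 \<or> g < emeasure M D"
  obtains A where "atom M A" "A \<subseteq> Z" "g < emeasure M A"
proof -
  define S where "S = {D \<in> sets M. D \<subseteq> Z \<and> 0 < emeasure M D}"
  define m where "m = (INF D\<in>S. emeasure M D)"
  have "Z \<in> S" using Z by (auto simp: S_def)
  then have "m < \<infinity>"
    using Z(3) unfolding m_def by (meson INF_lower le_less_trans)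
  have "g \<le> m"
    unfolding m_def S_def using no_small by (force intro!: INF_greatest)
  then have "0 < m" using \<open>g > 0\<close> by simp
  have "m + 0 < m + m"
    using \<open>0 < m\<close> \<open>m < \<infinity>\<close> by (subst ennreal_add_left_cancel_less) auto
  then obtain A where A: "A \<in> S" "emeasure M A < 2 * m"
    unfolding m_def mult_2 by (auto simp: INF_less_iff)
  \<comment> \<open>An element of S of measure below 2m is an atom: splitting it would give two parts of measure at least m.\<close>
  have "atom M A"
    unfolding atom_def
  proof (intro conjI ballI impI)
    show "A \<in> sets M" "0 < emeasure M A" using A(1) by (auto simp: S_def)
    fix E assume E: "E \<in> sets M" "E \<subseteq> A"
    show "emeasure M E = 0 \<or> emeasure M E = emeasure M A"
    proof (rule ccontr)
      assume "\<not> ?thesis"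
      moreover have split: "emeasure M A = emeasure M E + emeasure M (A - E)"
        using E A(1) plus_emeasure[of E M "A - E"] by (auto simp: S_def Un_absorb1)
      ultimately have "E \<in> S" "A - E \<in> S"
        using E A(1) by (auto simp: S_def zero_less_iff_neq_zero)
      then have "m + m \<le> emeasure M E + emeasure M (A - E)"
        unfolding m_def by (intro add_mono INF_lower)
      then show False using A(2) split by (simp add: mult_2)
    qed
  qed
  moreover have "g < emeasure M A"
    using A(1) no_small by (force simp: S_def)
  ultimately show thesis using A(1) that by (auto simp: S_def)
qed

definition admissible_pieces :: "'a measure \<Rightarrow> 'a set \<Rightarrow> ennreal \<Rightarrow> 'a set \<Rightarrow> 'a set set" where
  "admissible_pieces M X x V = {D \<in> sets M. D \<subseteq> X - V \<and> emeasure M D \<le> x - emeasure M V}"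

lemma half_maximal_admissible_piece:
  assumes "x < \<infinity>"
  obtains D where "D \<in> admissible_pieces M X x V"
    "Sup (emeasure M ` admissible_pieces M X x V) \<le> 2 * emeasure M D"
proof -
  have "Sup (emeasure M ` admissible_pieces M X x V) \<le> x"
    unfolding admissible_pieces_def
    by (rule Sup_least) (auto intro: order.trans[OF _ diff_le_self_ennreal])
  moreover have "{} \<in> admissible_pieces M X x V"
    by (simp add: admissible_pieces_def)
  ultimately show thesis
    using ennreal_Sup_le_twice_elem[of "emeasure M ` admissible_pieces M X x V"] assms that
    by fastforce
qed

lemma greedy_exhaustion:
  assumes "x < \<infinity>"
  obtains d :: "nat \<Rightarrow> 'a set"
  where "disjoint_family d" "\<And>n. d n \<in> sets M" "(\<Union>n. d n) \<subseteq> X" "emeasure M (\<Union>n. d n) \<le> x"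
    "\<And>D n. D \<in> sets M \<Longrightarrow> D \<subseteq> X - (\<Union>n. d n) \<Longrightarrow> emeasure M D \<le> x - emeasure M (\<Union>n. d n)
       \<Longrightarrow> emeasure M D \<le> 2 * emeasure M (d n)"
proof -
  let ?room = "admissible_pieces M X x"
  define I where "I V \<longleftrightarrow> V \<in> sets M \<and> V \<subseteq> X \<and> emeasure M V \<le> x" for V
  have step: "\<exists>D. D \<inter> V = {} \<and> (D \<in> ?room V \<and> Sup (emeasure M ` ?room V) \<le> 2 * emeasure M D) \<and>
                 I (V \<union> D)"
    if "I V" for V
  proof -
    obtain D where D: "D \<in> ?room V" "Sup (emeasure M ` ?room V) \<le> 2 * emeasure M D"
      using assms by (rule half_maximal_admissible_piece)
    have "emeasure M (V \<union> D) = emeasure M V + emeasure M D"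
      using that D(1) by (intro plus_emeasure[symmetric]) (auto simp: I_def admissible_pieces_def)
    also have "\<dots> \<le> emeasure M V + (x - emeasure M V)"
      using D(1) by (intro add_left_mono) (simp add: admissible_pieces_def)
    also have "\<dots> = x"
      using that by (simp add: I_def add_diff_self_ennreal)
    finally show ?thesis
      using that D by (intro exI[of _ D]) (auto simp: I_def admissible_pieces_def)
  qed
  obtain d :: "nat \<Rightarrow> 'a set" where disj: "disjoint_family d"
    and I_d: "\<And>n. I (\<Union>k<n. d k)"
    and d: "\<And>n. d n \<in> ?room (\<Union>k<n. d k) \<and> Sup (emeasure M ` ?room (\<Union>k<n. d k)) \<le> 2 * emeasure M (d n)"
    by (rule greedy_disjoint_family[of "\<lambda>n V. I V"
          "\<lambda>n V D. D \<in> ?room V \<and> Sup (emeasure M ` ?room V) \<le> 2 * emeasure M D", OF _ step])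
      (simp_all add: I_def that)
  have "(\<Union>n. d n) = (\<Union>n. \<Union>k<n. d k)"
    by auto
  moreover have "incseq (\<lambda>n. \<Union>k<n. d k)"
    by (intro monoI UN_mono) auto
  ultimately have "emeasure M (\<Union>n. d n) = (SUP n. emeasure M (\<Union>k<n. d k))"
    using I_d by (simp add: SUP_emeasure_incseq I_def image_subset_iff)
  then have "emeasure M (\<Union>n. d n) \<le> x"
    using I_d by (auto simp: I_def intro: SUP_least)
  moreover have "emeasure M D \<le> 2 * emeasure M (d n)"
    if "D \<in> sets M" "D \<subseteq> X - (\<Union>n. d n)" "emeasure M D \<le> x - emeasure M (\<Union>n. d n)" for D n
  proof -
    have "(\<Union>n. d n) \<in> sets M"
      using d by (auto simp: admissible_pieces_def)
    then have "x - emeasure M (\<Union>n. d n) \<le> x - emeasure M (\<Union>k<n. d k)"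
      by (intro ennreal_minus_mono emeasure_mono) auto
    then have "D \<in> ?room (\<Union>k<n. d k)"
      using that by (auto simp: admissible_pieces_def)
    then show ?thesis
      using d[of n] by (auto intro: order.trans[OF Sup_upper])
  qed
  ultimately show thesis
    using disj d by (intro that) (auto simp: admissible_pieces_def)
qed

lemma emeasure_dyadic_selection:
  fixes T z :: real
  assumes "T \<ge> 0" "disjoint_family b" "\<And>n. b n \<in> sets M"
    and "\<And>n. emeasure M (b n) = ennreal (T / 2 ^ Suc n)"
    and "(\<lambda>k. if \<delta> k then 1 / 2 ^ Suc k else 0) sums z"
  shows "emeasure M (\<Union>k\<in>Collect \<delta>. b k) = ennreal (T * z)"
proof -
  define c where "c k = (if \<delta> k then b k else {})" for k
  have "(\<Union>k\<in>Collect \<delta>. b k) = (\<Union>k. c k)"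
    by (auto simp: c_def split: if_splits)
  moreover have "(\<Sum>k. emeasure M (c k)) = emeasure M (\<Union>k. c k)"
    using assms(2,3) by (intro suminf_emeasure) (auto simp: c_def disjoint_family_on_def)
  moreover have "emeasure M (c k) = ennreal (T * (if \<delta> k then 1 / 2 ^ Suc k else 0))" for k
    using assms(4) by (simp add: c_def)
  moreover have "(\<Sum>k. ennreal (T * (if \<delta> k then 1 / 2 ^ Suc k else 0))) = ennreal (T * z)"
    using assms(1,5) by (intro suminf_ennreal_eq sums_mult) auto
  ultimately show ?thesis by simp
qed

lemma dyadic_family:
  fixes T :: real
  assumes "T \<ge> 0" "disjoint_family b" "\<And>n. b n \<in> sets M"
    and "\<And>n. emeasure M (b n) = ennreal (T / 2 ^ Suc n)"
  shows emeasure_dyadic_family: "emeasure M (\<Union>n. b n) = ennreal T"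
    and dyadic_family_attains: "y \<le> ennreal T \<Longrightarrow> \<exists>B\<in>sets M. B \<subseteq> (\<Union>n. b n) \<and> emeasure M B = y"
proof -
  have "(\<lambda>k. if True then 1 / 2 ^ Suc k else 0) sums (1::real)"
    using power_half_series by (simp add: power_one_over)
  from emeasure_dyadic_selection[OF assms this] show "emeasure M (\<Union>n. b n) = ennreal T"
    by simp
  assume "y \<le> ennreal T"
  then obtain y' where y': "y = ennreal y'" "0 \<le> y'" "y' \<le> T"
    using assms(1) by (cases y) (auto simp: top_unique)
  show "\<exists>B\<in>sets M. B \<subseteq> (\<Union>n. b n) \<and> emeasure M B = y"
  proof (cases "y' = T")
    case True
    then show ?thesis
      using \<open>emeasure M (\<Union>n. b n) = ennreal T\<close> assms(3) y'(1) by blast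
  next
    case False
    then have "0 \<le> y' / T" "y' / T < 1"
      using y' by auto
    then obtain \<delta> where "(\<lambda>k. if \<delta> k then 1 / 2 ^ Suc k else 0) sums (y' / T)"
      by (rule binary_expansion)
    from emeasure_dyadic_selection[OF assms this] show ?thesis
      using False y' assms(3) by (intro bexI[of _ "\<Union>k\<in>Collect \<delta>. b k"]) auto
  qed
qed

lemma restr_range_eq_atMost:
  assumes "C \<in> sets M" and attains: "\<And>y. y \<le> emeasure M C \<Longrightarrow> \<exists>B\<in>sets M. B \<subseteq> C \<and> emeasure M B = y"
  shows "restr_range M C = {..emeasure M C}"
proof
  show "restr_range M C \<subseteq> {..emeasure M C}"
    using assms(1) by (auto simp: restr_range_def intro: emeasure_mono)
  show "{..emeasure M C} \<subseteq> restr_range M C"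
  proof
    fix y assume "y \<in> {..emeasure M C}"
    then obtain B where "B \<in> sets M" "B \<subseteq> C" "emeasure M B = y"
      using attains by auto
    then show "y \<in> restr_range M C"
      unfolding restr_range_def by (intro image_eqI[of _ _ B]) (auto simp: Int_absorb2)
  qed
qed

lemma restr_range_space: "restr_range M (space M) = measure_range M"
  unfolding restr_range_def measure_range_def
  by (intro image_cong refl) (simp add: Int_absorb2 sets.sets_into_space)

locale large_atoms_finite_measure = sigma_finite_measure +
  assumes large_atoms_finite:
    "\<And>\<epsilon> F. \<epsilon> > 0 \<Longrightarrow> countable F \<Longrightarrow> F \<subseteq> {A. atom M A \<and> emeasure M A > \<epsilon>}
       \<Longrightarrow> emeasure M (\<Union>F) < \<infinity>"
begin

lemma atom_emeasure_less_top: "atom M A \<Longrightarrow> g > 0 \<Longrightarrow> g < emeasure M A \<Longrightarrow> emeasure M A < \<infinity>"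
  using large_atoms_finite[of g "{A}"] by auto

lemma small_subset_of_infinite:
  assumes Y: "Y \<in> sets M" "emeasure M Y = \<infinity>" and "g > 0"
  shows "\<exists>D\<in>sets M. D \<subseteq> Y \<and> 0 < emeasure M D \<and> emeasure M D \<le> g"
proof (rule ccontr)
  assume "\<not> ?thesis"
  then have no_small: "emeasure M D = 0 \<or> g < emeasure M D" if "D \<in> sets M" "D \<subseteq> Y" for D
    using that by (auto simp: not_le zero_less_iff_neq_zero)
  have step: "\<exists>A. A \<inter> V = {} \<and> (atom M A \<and> g < emeasure M A) \<and>
                 V \<union> A \<in> sets M \<and> emeasure M (V \<union> A) < \<infinity>"
    if V: "V \<in> sets M \<and> emeasure M V < \<infinity>" for V
  proof -
    have "emeasure M (Y - V) = \<infinity>" using Y V by (intro emeasure_Diff_eq_top) auto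
    then obtain Z where Z: "Z \<in> sets M" "Z \<subseteq> Y - V" "emeasure M Z < \<infinity>" "0 < emeasure M Z"
      using approx_PInf_emeasure_with_finite[of "Y - V" 0] Y V by auto
    moreover have "emeasure M D = 0 \<or> g < emeasure M D" if "D \<in> sets M" "D \<subseteq> Z" for D
      using no_small that Z(2) by blast
    ultimately obtain A where A: "atom M A" "A \<subseteq> Z" "g < emeasure M A"
      using atom_in_set_without_small_subsets[of Z M g] \<open>g > 0\<close> by blast
    have "emeasure M A < \<infinity>"
      using A(1) \<open>g > 0\<close> A(3) by (rule atom_emeasure_less_top)
    then have "emeasure M (V \<union> A) < \<infinity>"
      using A(1) V by (intro emeasure_Un_less_top) (auto simp: atom_def)
    then show ?thesis using A V Z by (intro exI[of _ A]) (auto simp: atom_def)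
  qed
  obtain A :: "nat \<Rightarrow> 'a set" where "disjoint_family A" "\<And>n. atom M (A n) \<and> g < emeasure M (A n)"
    by (rule greedy_disjoint_family[of "\<lambda>n V. V \<in> sets M \<and> emeasure M V < \<infinity>"
        "\<lambda>n V A. atom M A \<and> g < emeasure M A", OF _ step]) (simp_all add: that)
  moreover from this have "range A \<subseteq> sets M" by (auto simp: atom_def)
  ultimately have "emeasure M (\<Union>n. A n) = \<infinity>"
    using \<open>g > 0\<close> by (simp add: suminf_emeasure[symmetric] suminf_eq_top_if_bounded_below less_imp_le)
  moreover have "emeasure M (\<Union>n. A n) < \<infinity>"
    using large_atoms_finite[of g "range A"] \<open>g > 0\<close> \<open>\<And>n. atom M (A n) \<and> g < emeasure M (A n)\<close>
    by auto
  ultimately show False by simp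
qed

lemma subset_with_emeasure:
  assumes X: "X \<in> sets M" "emeasure M X = \<infinity>" and "x < \<infinity>"
  obtains B where "B \<in> sets M" "B \<subseteq> X" "emeasure M B = x"
proof -
  obtain d :: "nat \<Rightarrow> 'a set" where disj: "disjoint_family d" and d: "\<And>n. d n \<in> sets M"
    and "(\<Union>n. d n) \<subseteq> X" "emeasure M (\<Union>n. d n) \<le> x"
    and half_max: "\<And>D n. D \<in> sets M \<Longrightarrow> D \<subseteq> X - (\<Union>n. d n)
      \<Longrightarrow> emeasure M D \<le> x - emeasure M (\<Union>n. d n) \<Longrightarrow> emeasure M D \<le> 2 * emeasure M (d n)"
    using \<open>x < \<infinity>\<close> by (rule greedy_exhaustion[where M = M and X = X]) (rule that)
  define B where "B = (\<Union>n. d n)"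
  have B_sets: "B \<in> sets M"
    using d by (auto simp: B_def)
  have "\<not> emeasure M B < x"
  proof
    assume "emeasure M B < x"
    moreover have "emeasure M (X - B) = \<infinity>"
      using X B_sets \<open>emeasure M B < x\<close> \<open>x < \<infinity>\<close> by (intro emeasure_Diff_eq_top) auto
    ultimately obtain D0 where D0: "D0 \<in> sets M" "D0 \<subseteq> X - B" "0 < emeasure M D0"
        "emeasure M D0 \<le> x - emeasure M B"
      using small_subset_of_infinite[of "X - B" "x - emeasure M B"] X B_sets
      by (auto simp: diff_gr0_ennreal)
    \<comment> \<open>D0 was admissible at every step of the exhaustion, so no piece d n is smaller than half of it.\<close>
    then have "(\<Sum>n. 2 * emeasure M (d n)) = \<infinity>"
      by (intro suminf_eq_top_if_bounded_below[OF D0(3)] half_max) (auto simp: B_def)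
    moreover have "(\<Sum>n. emeasure M (d n)) = emeasure M B"
      using disj d by (simp add: B_def suminf_emeasure image_subset_iff)
    ultimately show False
      using \<open>emeasure M B < x\<close> \<open>x < \<infinity>\<close> by (simp add: ennreal_mult_eq_top_iff)
  qed
  then show thesis
    using B_sets \<open>(\<Union>n. d n) \<subseteq> X\<close> \<open>emeasure M (\<Union>n. d n) \<le> x\<close>
    by (intro that[of B]) (auto simp: B_def)
qed

lemma disjoint_family_with_emeasures:
  assumes "emeasure M (space M) = \<infinity>" "\<And>n. r n < \<infinity>"
  obtains b :: "nat \<Rightarrow> 'a set"
  where "disjoint_family b" "\<And>n. b n \<in> sets M" "\<And>n. emeasure M (b n) = r n"
proof -
  have step: "\<exists>B. B \<inter> V = {} \<and> (B \<in> sets M \<and> emeasure M B = r n) \<and>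
                 V \<union> B \<in> sets M \<and> emeasure M (V \<union> B) < \<infinity>"
    if V: "V \<in> sets M \<and> emeasure M V < \<infinity>" for n V
  proof -
    have "space M - V \<in> sets M"
      using V by auto
    moreover have "emeasure M (space M - V) = \<infinity>"
      using assms(1) V by (intro emeasure_Diff_eq_top) auto
    ultimately obtain B where "B \<in> sets M" "B \<subseteq> space M - V" "emeasure M B = r n"
      using assms(2) by (rule subset_with_emeasure)
    moreover from this have "emeasure M (V \<union> B) < \<infinity>"
      using V assms(2)[of n] by (intro emeasure_Un_less_top) auto
    ultimately show ?thesis
      using V by (intro exI[of _ B]) auto
  qed
  show thesis
    by (rule greedy_disjoint_family[of "\<lambda>n V. V \<in> sets M \<and> emeasure M V < \<infinity>"
          "\<lambda>n V B. B \<in> sets M \<and> emeasure M B = r n", OF _ step]) (simp_all add: that)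
qed

lemma set_with_restr_range_atMost:
  assumes "emeasure M (space M) = \<infinity>" "t < \<infinity>"
  obtains C where "C \<in> sets M" "emeasure M C = t" "restr_range M C = {..t}"
proof -
  define T where "T = enn2real t"
  have "t = ennreal T" "T \<ge> 0"
    using assms(2) by (auto simp: T_def ennreal_enn2real_if)
  obtain b :: "nat \<Rightarrow> 'a set" where b: "disjoint_family b" "\<And>n. b n \<in> sets M"
    "\<And>n. emeasure M (b n) = ennreal (T / 2 ^ Suc n)"
    by (rule disjoint_family_with_emeasures[of "\<lambda>n. ennreal (T / 2 ^ Suc n)", OF assms(1)])
      (simp_all add: that)
  have "(\<Union>n. b n) \<in> sets M" "emeasure M (\<Union>n. b n) = t"
    using b emeasure_dyadic_family[OF \<open>T \<ge> 0\<close> b] \<open>t = ennreal T\<close> by auto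
  moreover have "restr_range M (\<Union>n. b n) = {..t}"
    using restr_range_eq_atMost[OF \<open>(\<Union>n. b n) \<in> sets M\<close>] dyadic_family_attains[OF \<open>T \<ge> 0\<close> b]
      \<open>emeasure M (\<Union>n. b n) = t\<close> \<open>t = ennreal T\<close> by simp
  ultimately show thesis
    by (rule that)
qed

end

theorem lemma3p1:
  fixes M :: "'a measure"
  assumes "sigma_finite_measure M"
    and "purely_atomic M"
    and "order_interval (measure_range M)"
    and "\<And>\<epsilon> F. \<epsilon> > 0 \<Longrightarrow> countable F \<Longrightarrow> F \<subseteq> {A. atom M A \<and> emeasure M A > \<epsilon>}
           \<Longrightarrow> emeasure M (\<Union>F) < \<infinity>"
    and "t < emeasure M (space M)"
  shows "\<exists>C \<in> sets M. emeasure M C \<ge> t \<and> order_interval (restr_range M C)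
           \<and> (\<forall>r \<in> restr_range M C. r < \<infinity>)"
proof (cases "emeasure M (space M) < \<infinity>")
  case True
  then show ?thesis
    using assms(3,5) by (intro bexI[of _ "space M"])
      (auto simp: restr_range_space measure_range_def intro: le_less_trans[OF emeasure_space])
next
  case False
  interpret large_atoms_finite_measure M
    using assms(1,4) by (simp add: large_atoms_finite_measure_def large_atoms_finite_measure_axioms_def)
  have "emeasure M (space M) = \<infinity>"
    using False by (simp add: less_top[symmetric])
  moreover have "t < \<infinity>"
    using assms(5) not_top_less[of "emeasure M (space M)"] by (auto simp: less_top[symmetric])
  ultimately obtain C where "C \<in> sets M" "emeasure M C = t" "restr_range M C = {..t}"
    by (rule set_with_restr_range_atMost)
  then show ?thesis
    using \<open>t < \<infinity>\<close> by (intro bexI[of _ C]) (auto simp: order_interval_def intro: le_less_trans)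
qed

end
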